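(* Let $\mathcal{R}^{rsc}$ be a rich single-crossing domain and $F:\mathcal{R}^{rsc}\to\mathbb{Z}$ a mechanism such that $F$ is monotone, $V^F$ is continuous, and the range $Rn(F)$ is finite. Then $F$ is strategy-proof. (The same holds when $\mathcal{R}^{rsc}$ is replaced by a closed interval $[\underline R,\overline R]\subseteq\mathcal{R}^{rsc}$.)
   Context: $\mathbb{Z}=[0,\infty)\times[0,1]$; $(t',q')<(t'',q'')$ means $t'<t''$, $q'<q''$; $x\le y$ means $x=y$ or $x<y$; $\square(z)=\{x:x\le z\}$. A classical preference is a complete transitive relation $R$ on $\mathbb{Z}$ (strict part $P$, indifference $I$) strictly decreasing in $t$ for fixed $q$, strictly increasing in $q$ for fixed $t$, with closed upper and lower contour sets. Distinct classical preferences satisfy single-crossing if any indifference set of one meets any indifference set of the other in at most one point. A rich single-crossing domain $\mathcal{R}^{rsc}$ is a set of pairwise single-crossing classical preferences such that for all $x'<x''$ some member is indifferent between them. For distinct members, $R'\prec R''$ means $\square(z)\cap\{x:xR''z\}\subseteq\square(z)\cap\{x:xR'z\}$ for all $z$; $\prec$ is a linear order and $\mathcal{R}^{rsc}$ has the order topology. A mechanism $F$ maps the domain into $\mathbb{Z}$; it is strategy-proof if $F(R')R'F(R'')$ for all $R',R''$, and monotone if $R'\prec R''$ implies $F(R')\le F(R'')$. $V^F(R)=\{z: zIF(R)\}$ is continuous if for every $R$ and every monotone sequence $R^n\to R$ in the order topology (i.e. $R^n\precsim R^{n+1}$ for all $n$, or $R^{n+1}\precsim R^n$ for all $n$), $F(R^n)$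 converges in $\mathbb{Z}$ and $\lim F(R^n)\,I\,F(R)$. *)

theory Defs
  imports "HOL-Analysis.Analysis"
begin

type_synonym bndl = "real \<times> real"
type_synonym pref = "bndl \<Rightarrow> bndl \<Rightarrow> bool"

definition ZZ :: "bndl set" where
  "ZZ = {(t, q). 0 \<le> t \<and> 0 \<le> q \<and> q \<le> 1}"

definition lessZ :: "bndl \<Rightarrow> bndl \<Rightarrow> bool" where
  "lessZ x y \<longleftrightarrow> fst x < fst y \<and> snd x < snd y"

definition leZ :: "bndl \<Rightarrow> bndl \<Rightarrow> bool" where
  "leZ x y \<longleftrightarrow> x = y \<or> lessZ x y"

definition boxZ :: "bndl \<Rightarrow> bndl set" where
  "boxZ z = {x \<in> ZZ. leZ x z}"

definition strictP :: "pref \<Rightarrow> bndl \<Rightarrow> bndl \<Rightarrow> bool" where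
  "strictP R x y \<longleftrightarrow> R x y \<and> \<not> R y x"

definition indiff :: "pref \<Rightarrow> bndl \<Rightarrow> bndl \<Rightarrow> bool" where
  "indiff R x y \<longleftrightarrow> R x y \<and> R y x"

definition classical :: "pref \<Rightarrow> bool" where
  "classical R \<longleftrightarrow>
     (\<forall>x y. R x y \<longrightarrow> x \<in> ZZ \<and> y \<in> ZZ) \<and>
     (\<forall>x\<in>ZZ. \<forall>y\<in>ZZ. R x y \<or> R y x) \<and>
     (\<forall>x\<in>ZZ. \<forall>y\<in>ZZ. \<forall>z\<in>ZZ. R x y \<longrightarrow> R y z \<longrightarrow> R x z) \<and>
     (\<forall>t t' q. (t, q) \<in> ZZ \<longrightarrow> (t', q) \<in> ZZ \<longrightarrow> t < t' \<longrightarrow> strictP R (t, q) (t', q)) \<and>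
     (\<forall>t q q'. (t, q) \<in> ZZ \<longrightarrow> (t, q') \<in> ZZ \<longrightarrow> q < q' \<longrightarrow> strictP R (t, q') (t, q)) \<and>
     (\<forall>z\<in>ZZ. closed {x \<in> ZZ. R x z} \<and> closed {x \<in> ZZ. R z x})"

definition single_crossing :: "pref \<Rightarrow> pref \<Rightarrow> bool" where
  "single_crossing R1 R2 \<longleftrightarrow>
     (\<forall>z1\<in>ZZ. \<forall>z2\<in>ZZ. \<forall>x\<in>ZZ. \<forall>y\<in>ZZ.
        indiff R1 x z1 \<and> indiff R2 x z2 \<and> indiff R1 y z1 \<and> indiff R2 y z2 \<longrightarrow> x = y)"

definition rich_single_crossing :: "pref set \<Rightarrow> bool" where
  "rich_single_crossing D \<longleftrightarrow>
     (\<forall>R\<in>D. classical R) \<and>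
     (\<forall>R1\<in>D. \<forall>R2\<in>D. R1 \<noteq> R2 \<longrightarrow> single_crossing R1 R2) \<and>
     (\<forall>x\<in>ZZ. \<forall>y\<in>ZZ. lessZ x y \<longrightarrow> (\<exists>R\<in>D. indiff R x y))"

definition prec :: "pref \<Rightarrow> pref \<Rightarrow> bool" where
  "prec R1 R2 \<longleftrightarrow> R1 \<noteq> R2 \<and>
     (\<forall>z\<in>ZZ. boxZ z \<inter> {x. R2 x z} \<subseteq> boxZ z \<inter> {x. R1 x z})"

definition preceq :: "pref \<Rightarrow> pref \<Rightarrow> bool" where
  "preceq R1 R2 \<longleftrightarrow> R1 = R2 \<or> prec R1 R2"

text \<open>Convergence in the order topology of the linearly ordered set S:
  every open ray of S containing the limit eventually contains the sequence.\<close>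
definition order_converges :: "pref set \<Rightarrow> (nat \<Rightarrow> pref) \<Rightarrow> pref \<Rightarrow> bool" where
  "order_converges S Rs R \<longleftrightarrow>
     (\<forall>A\<in>S. prec A R \<longrightarrow> (\<exists>N. \<forall>n\<ge>N. prec A (Rs n))) \<and>
     (\<forall>B\<in>S. prec R B \<longrightarrow> (\<exists>N. \<forall>n\<ge>N. prec (Rs n) B))"

definition monotone_seq :: "(nat \<Rightarrow> pref) \<Rightarrow> bool" where
  "monotone_seq Rs \<longleftrightarrow> (\<forall>n. preceq (Rs n) (Rs (Suc n))) \<or> (\<forall>n. preceq (Rs (Suc n)) (Rs n))"

definition strategy_proof :: "pref set \<Rightarrow> (pref \<Rightarrow> bndl) \<Rightarrow> bool" where
  "strategy_proof S F \<longleftrightarrow> (\<forall>R1\<in>S. \<forall>R2\<in>S. R1 (F R1) (F R2))"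

definition monotone_mech :: "pref set \<Rightarrow> (pref \<Rightarrow> bndl) \<Rightarrow> bool" where
  "monotone_mech S F \<longleftrightarrow> (\<forall>R1\<in>S. \<forall>R2\<in>S. prec R1 R2 \<longrightarrow> leZ (F R1) (F R2))"

definition VF_continuous :: "pref set \<Rightarrow> (pref \<Rightarrow> bndl) \<Rightarrow> bool" where
  "VF_continuous S F \<longleftrightarrow>
     (\<forall>R\<in>S. \<forall>Rs. (\<forall>n. Rs n \<in> S) \<and> monotone_seq Rs \<and> order_converges S Rs R \<longrightarrow>
        (\<exists>L\<in>ZZ. (\<lambda>n. F (Rs n)) \<longlonglongrightarrow> L \<and> indiff R L (F R)))"

definition mechanism :: "pref set \<Rightarrow> (pref \<Rightarrow> bndl) \<Rightarrow> bool" where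
  "mechanism S F \<longleftrightarrow> (\<forall>R\<in>S. F R \<in> ZZ)"

definition closed_interval :: "pref set \<Rightarrow> pref \<Rightarrow> pref \<Rightarrow> pref set" where
  "closed_interval D Rlo Rhi = {R \<in> D. preceq Rlo R \<and> preceq R Rhi}"

end

theory Submission
  imports Defs
begin

text \<open>The point where the indifference curve of a preference through \<open>(1, 1)\<close> crosses a fixed
  staircase defines a real index, which identifies a rich single-crossing domain with an interval of
  reals and turns \<open>\<prec>\<close> into \<open><\<close>.  That \<open>\<prec>\<close> is linear at all means that two single-crossing
  preferences cannot rank two dominance-ordered pairs of bundles in opposite ways, which follows from
  an intermediate value argument.  Strategy-proofness between two types is then proved by induction
  on the number of outcomes between them: an intermediate outcome splits the interval, and when only
  two outcomes occur, continuity of \<open>V\<^sup>F\<close> makes the type at which the outcome switches indifferent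
  between them, which the single-crossing order propagates to the two end types.\<close>

section \<open>Classical preferences\<close>

lemma classical_in_ZZ: "classical R \<Longrightarrow> R x y \<Longrightarrow> x \<in> ZZ \<and> y \<in> ZZ"
  unfolding classical_def by blast

lemma classical_total: "classical R \<Longrightarrow> x \<in> ZZ \<Longrightarrow> y \<in> ZZ \<Longrightarrow> R x y \<or> R y x"
  unfolding classical_def by blast

lemma classical_refl: "classical R \<Longrightarrow> x \<in> ZZ \<Longrightarrow> R x x"
  using classical_total by blast

lemma classical_trans: "classical R \<Longrightarrow> R x y \<Longrightarrow> R y z \<Longrightarrow> R x z"
  unfolding classical_def by blast

lemma classical_closed_lower: "classical R \<Longrightarrow> z \<in> ZZ \<Longrightarrow> closed {x \<in> ZZ. R x z}"
  unfolding classical_def by blast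

lemma classical_closed_upper: "classical R \<Longrightarrow> z \<in> ZZ \<Longrightarrow> closed {x \<in> ZZ. R z x}"
  unfolding classical_def by blast

lemma indiff_in_ZZ: "classical R \<Longrightarrow> indiff R x y \<Longrightarrow> x \<in> ZZ \<and> y \<in> ZZ"
  unfolding indiff_def using classical_in_ZZ by blast

lemma closed_ZZ: "closed ZZ"
proof -
  have "ZZ = {p. 0 \<le> fst p} \<inter> {p. 0 \<le> snd p} \<inter> {p. snd p \<le> (1::real)}"
    by (auto simp: ZZ_def)
  moreover have "closed {p. 0 \<le> fst (p::bndl)}" "closed {p. 0 \<le> snd (p::bndl)}"
    "closed {p. snd (p::bndl) \<le> 1}"
    by (intro closed_Collect_le continuous_intros)+
  ultimately show ?thesis by (metis closed_Int)
qed

lemma classical_cheaper: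
  "classical R \<Longrightarrow> (t, q) \<in> ZZ \<Longrightarrow> (t', q) \<in> ZZ \<Longrightarrow> t < t' \<Longrightarrow>
    R (t, q) (t', q) \<and> \<not> R (t', q) (t, q)"
  unfolding classical_def strictP_def by blast

lemma classical_more_quantity:
  "classical R \<Longrightarrow> (t, q) \<in> ZZ \<Longrightarrow> (t, q') \<in> ZZ \<Longrightarrow> q < q' \<Longrightarrow>
    R (t, q') (t, q) \<and> \<not> R (t, q) (t, q')"
  unfolding classical_def strictP_def by blast

lemma classical_prefers_dominating:
  assumes R: "classical R" and x: "x \<in> ZZ" and y: "y \<in> ZZ"
    and "fst x \<le> fst y" and "snd y \<le> snd x"
  shows "R x y"
proof -
  obtain t q t' q' where xy: "x = (t, q)" "y = (t', q')" by (cases x, cases y)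
  have m: "(t, q') \<in> ZZ" using x y by (auto simp: xy ZZ_def)
  have "R (t, q) (t, q')"
    using classical_more_quantity[OF R m x[unfolded xy]] classical_refl[OF R m] assms(5) xy
    by (cases "q' < q") auto
  moreover have "R (t, q') (t', q')"
    using classical_cheaper[OF R m y[unfolded xy]] classical_refl[OF R m] assms(4) xy
    by (cases "t < t'") auto
  ultimately show ?thesis using classical_trans[OF R] xy by blast
qed

lemma classical_not_prefers_dominated:
  assumes R: "classical R" and x: "x \<in> ZZ" and y: "y \<in> ZZ"
    and "fst x \<le> fst y" and "snd y \<le> snd x" and "x \<noteq> y"
  shows "\<not> R y x"
proof
  assume yx: "R y x"
  obtain t q t' q' where xy: "x = (t, q)" "y = (t', q')" by (cases x, cases y)
  have m: "(t, q') \<in> ZZ" using x y by (auto simp: xy ZZ_def)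
  have xm: "R (t, q) (t, q')" and my: "R (t, q') (t', q')"
    using classical_prefers_dominating[OF R x m] classical_prefers_dominating[OF R m y]
      assms(4,5) xy by auto
  have "R (t, q') (t, q)" using classical_trans[OF R my] yx xy by simp
  moreover have "R (t', q') (t, q')" using classical_trans[OF R yx] xm xy by simp
  ultimately show False
    using classical_more_quantity[OF R m x[unfolded xy]] classical_cheaper[OF R m y[unfolded xy]]
      assms(4-6) xy by (cases "q' < q") auto
qed

lemma classical_eventually_not_prefers:
  assumes R: "classical R" and z: "z \<in> ZZ" and xs: "\<And>n. xs n \<in> ZZ" and lim: "xs \<longlonglongrightarrow> x"
  shows "\<not> R x z \<Longrightarrow> eventually (\<lambda>n. \<not> R (xs n) z) sequentially"
    and "\<not> R z x \<Longrightarrow> eventually (\<lambda>n. \<not> R z (xs n)) sequentially"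
proof -
  have ev: "eventually (\<lambda>n. xs n \<notin> C) sequentially" if "closed C" "x \<notin> C" for C
    using topological_tendstoD[OF lim, of "- C"] that by auto
  show "\<not> R x z \<Longrightarrow> eventually (\<lambda>n. \<not> R (xs n) z) sequentially"
    using ev[OF classical_closed_lower[OF R z]] xs by (auto elim: eventually_mono)
  show "\<not> R z x \<Longrightarrow> eventually (\<lambda>n. \<not> R z (xs n)) sequentially"
    using ev[OF classical_closed_upper[OF R z]] xs by (auto elim: eventually_mono)
qed

lemma classical_closed_graph:
  assumes R: "classical R"
  shows "closed {p. R (fst p) (snd p)}"
  unfolding closed_sequential_limits
proof (intro allI impI, elim conjE)
  fix s l assume sR: "\<forall>n. s n \<in> {p. R (fst p) (snd p)}" and lim: "s \<longlonglongrightarrow> l"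
  define a where "a = (\<lambda>n. fst (s n))"
  define b where "b = (\<lambda>n. snd (s n))"
  have ab: "R (a n) (b n)" for n using sR by (auto simp: a_def b_def)
  have aZ: "a n \<in> ZZ" and bZ: "b n \<in> ZZ" for n using classical_in_ZZ[OF R ab] by auto
  have la: "a \<longlonglongrightarrow> fst l" and lb: "b \<longlonglongrightarrow> snd l"
    unfolding a_def b_def by (intro tendsto_fst tendsto_snd lim)+
  have laZ: "fst l \<in> ZZ" and lbZ: "snd l \<in> ZZ"
    using closed_ZZ la lb aZ bZ closed_sequentially by blast+
  show "l \<in> {p. R (fst p) (snd p)}"
  proof (rule ccontr)
    assume "l \<notin> {p. R (fst p) (snd p)}"
    then have n: "\<not> R (fst l) (snd l)" by simp
    \<comment> \<open>Separate the two bundles by the open contour sets of a bundle strictly between them,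
      or, if there is none, by their own complementary open contour sets.\<close>
    show False
    proof (cases "\<exists>w\<in>ZZ. \<not> R w (snd l) \<and> \<not> R (fst l) w")
      case True
      then obtain w where wZ: "w \<in> ZZ" and w1: "\<not> R w (snd l)" and w2: "\<not> R (fst l) w" by blast
      have "eventually (\<lambda>n. \<not> R w (b n) \<and> \<not> R (a n) w) sequentially"
        using classical_eventually_not_prefers(2)[OF R wZ bZ lb w1]
          classical_eventually_not_prefers(1)[OF R wZ aZ la w2] by (rule eventually_conj)
      then obtain n where "\<not> R w (b n)" "\<not> R (a n) w"
        using eventually_sequentially by auto
      then show False
        using ab classical_trans[OF R] classical_total[OF R] aZ bZ wZ by metis
    next
      case False
      have "eventually (\<lambda>n. \<not> R (fst l) (b n) \<and> \<not> R (a n) (snd l)) sequentially"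
        using classical_eventually_not_prefers(2)[OF R laZ bZ lb n]
          classical_eventually_not_prefers(1)[OF R lbZ aZ la n] by (rule eventually_conj)
      then obtain n where h1: "\<not> R (fst l) (b n)" and h2: "\<not> R (a n) (snd l)"
        using eventually_sequentially by auto
      have "R (fst l) (a n)" using False aZ[of n] h2 by blast
      then show False using ab h1 classical_trans[OF R] by blast
    qed
  qed
qed

lemma classical_indiff_on_path:
  fixes u v :: "real \<Rightarrow> bndl"
  assumes R: "classical R" and "a \<le> b"
    and u: "continuous_on {a..b} u" and v: "continuous_on {a..b} v"
    and uv: "\<And>s. s \<in> {a..b} \<Longrightarrow> u s \<in> ZZ \<and> v s \<in> ZZ"
    and start: "R (u a) (v a)" and stop: "R (v b) (u b)"
  shows "\<exists>s\<in>{a..b}. indiff R (u s) (v s)"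
proof -
  define A where "A = {a..b} \<inter> (\<lambda>s. (u s, v s)) -` {p. R (fst p) (snd p)}"
  define B where "B = {a..b} \<inter> (\<lambda>s. (v s, u s)) -` {p. R (fst p) (snd p)}"
  have "closed A" "closed B" unfolding A_def B_def
    by (intro continuous_closed_preimage closed_atLeastAtMost classical_closed_graph[OF R]
        continuous_on_Pair u v)+
  moreover have "{a..b} \<subseteq> A \<union> B"
    using classical_total[OF R] uv by (fastforce simp: A_def B_def)
  moreover have "A \<inter> {a..b} \<noteq> {}" "B \<inter> {a..b} \<noteq> {}"
    using start stop \<open>a \<le> b\<close> by (auto simp: A_def B_def)
  ultimately have "A \<inter> B \<inter> {a..b} \<noteq> {}"
    using connected_closedD[OF connected_Icc] by blast
  then show ?thesis by (auto simp: A_def B_def indiff_def)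
qed

section \<open>Staircases and indifference levels\<close>

definition staircase :: "real \<Rightarrow> real \<Rightarrow> bndl" where
  "staircase q0 l = (max (-l) 0, q0 + max l 0)"

lemma staircase_in_ZZ: "0 \<le> q0 \<Longrightarrow> q0 + max l 0 \<le> 1 \<Longrightarrow> staircase q0 l \<in> ZZ"
  by (auto simp: staircase_def ZZ_def)

lemma continuous_on_staircase: "continuous_on A (staircase q0)"
  unfolding staircase_def by (intro continuous_intros)

lemma staircase_neg: "0 \<le> t \<Longrightarrow> staircase q0 (-t) = (t, q0)"
  by (auto simp: staircase_def)

lemma staircase_strict:
  assumes R: "classical R" and "0 \<le> q0" and "m < l" and Z: "staircase q0 l \<in> ZZ"
  shows "\<not> R (staircase q0 m) (staircase q0 l)"
proof (rule classical_not_prefers_dominated[OF R Z])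
  show "staircase q0 m \<in> ZZ" using Z assms by (auto simp: staircase_def ZZ_def)
qed (use assms in \<open>auto simp: staircase_def\<close>)

lemma staircase_weak:
  assumes R: "classical R" and "0 \<le> q0" and "m \<le> l" and Z: "staircase q0 l \<in> ZZ"
  shows "R (staircase q0 l) (staircase q0 m)"
proof (rule classical_prefers_dominating[OF R Z])
  show "staircase q0 m \<in> ZZ" using Z assms by (auto simp: staircase_def ZZ_def)
qed (use assms in \<open>auto simp: staircase_def\<close>)

lemma staircase_indiff_unique:
  assumes R: "classical R" and q0: "0 \<le> q0"
    and l: "indiff R (staircase q0 l) v" and m: "indiff R (staircase q0 m) v"
  shows "l = m"
proof -
  have "R (staircase q0 m) (staircase q0 l)" "R (staircase q0 l) (staircase q0 m)"
    using l m classical_trans[OF R] unfolding indiff_def by blast+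
  then show ?thesis
    using staircase_strict[OF R q0, of m l] staircase_strict[OF R q0, of l m]
      indiff_in_ZZ[OF R l] indiff_in_ZZ[OF R m] by (cases "m < l"; cases "l < m") auto
qed

lemma staircase_indiff_exists:
  assumes R: "classical R" and v: "v \<in> ZZ" and tv: "0 < fst v" and q0: "0 \<le> q0" "q0 < snd v"
  shows "\<exists>l. - fst v < l \<and> l < snd v - q0 \<and> indiff R (staircase q0 l) v"
proof -
  have sv: "snd v \<le> 1" using v by (cases v) (auto simp: ZZ_def)
  have IZ: "staircase q0 l \<in> ZZ" if "l \<in> {- fst v .. snd v - q0}" for l
    using that q0 sv tv by (intro staircase_in_ZZ) auto
  have lo: "staircase q0 (- fst v) = (fst v, q0)" using tv by (simp add: staircase_neg)
  have hi: "staircase q0 (snd v - q0) = (0, snd v)" using q0 by (auto simp: staircase_def)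
  have loZ: "(fst v, q0) \<in> ZZ" and hiZ: "(0, snd v) \<in> ZZ"
    using IZ[of "- fst v"] IZ[of "snd v - q0"] lo hi tv q0 by auto
  have lo1: "R v (fst v, q0)" and lo2: "\<not> R (fst v, q0) v"
    using q0 classical_prefers_dominating[OF R v loZ] classical_not_prefers_dominated[OF R v loZ]
    by (auto simp: prod_eq_iff)
  have hi1: "R (0, snd v) v" and hi2: "\<not> R v (0, snd v)"
    using tv classical_prefers_dominating[OF R hiZ v] classical_not_prefers_dominated[OF R hiZ v]
    by (auto simp: prod_eq_iff)
  have "\<exists>l\<in>{- fst v .. snd v - q0}. indiff R v (staircase q0 l)"
    by (rule classical_indiff_on_path[OF R _ continuous_on_const continuous_on_staircase])
      (use IZ v lo hi lo1 hi1 tv q0 in auto)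
  then obtain l where l: "l \<in> {- fst v .. snd v - q0}" and I: "indiff R v (staircase q0 l)" ..
  have "l \<noteq> - fst v" "l \<noteq> snd v - q0" using I lo2 hi2 lo hi by (auto simp: indiff_def)
  then show ?thesis using l I by (intro exI[of _ l]) (auto simp: indiff_def)
qed

lemma closed_indiff_set:
  assumes R: "classical R" and T: "closed T"
    and f: "continuous_on T f" and g: "continuous_on T g"
  shows "closed {p \<in> T. indiff R (f p) (g p)}"
proof -
  have "{p \<in> T. indiff R (f p) (g p)} =
      (T \<inter> (\<lambda>p. (f p, g p)) -` {p. R (fst p) (snd p)}) \<inter>
      (T \<inter> (\<lambda>p. (g p, f p)) -` {p. R (fst p) (snd p)})"
    by (auto simp: indiff_def)
  then show ?thesis
    by (simp only: closed_Int continuous_closed_preimage T classical_closed_graph[OF R]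
        continuous_on_Pair f g)
qed

lemma staircase_indiff_ex1:
  assumes R: "classical R" and "v \<in> ZZ" and "0 < fst v" and "0 \<le> q0" and "q0 < snd v"
  shows "\<exists>!l. - fst v < l \<and> l < snd v - q0 \<and> indiff R (staircase q0 l) v"
  using staircase_indiff_exists[OF R assms(2-)] staircase_indiff_unique[OF R assms(4)] by blast

lemma continuous_indiff_level:
  fixes v :: "real \<Rightarrow> bndl" and q :: "real \<Rightarrow> real"
  assumes R: "classical R" and K: "compact K"
    and v: "continuous_on K v" and q: "continuous_on K q"
    and pos: "\<And>s. s \<in> K \<Longrightarrow> v s \<in> ZZ \<and> 0 < fst (v s) \<and> 0 \<le> q s \<and> q s < snd (v s)"
  obtains h where "continuous_on K h"
    and "\<And>s. s \<in> K \<Longrightarrow>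
      - fst (v s) < h s \<and> h s < snd (v s) - q s \<and> indiff R (staircase (q s) (h s)) (v s)"
proof -
  define h where "h s = (THE l. - fst (v s) < l \<and> l < snd (v s) - q s \<and>
    indiff R (staircase (q s) l) (v s))" for s
  have hP: "- fst (v s) < h s \<and> h s < snd (v s) - q s \<and> indiff R (staircase (q s) (h s)) (v s)"
    if "s \<in> K" for s
  proof -
    have "v s \<in> ZZ" "0 < fst (v s)" "0 \<le> q s" "q s < snd (v s)" using pos[OF that] by auto
    from theI'[OF staircase_indiff_ex1[OF R this]] show ?thesis unfolding h_def .
  qed
  obtain B where B: "\<And>s. s \<in> K \<Longrightarrow> norm (v s) \<le> B"
    using compact_imp_bounded[OF compact_continuous_image[OF v K]] unfolding bounded_iff by auto
  have "h s \<in> {-B..1}" if s: "s \<in> K" for s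
  proof -
    have "fst (v s) \<le> B" using B[OF s] norm_fst_le[of "fst (v s)" "snd (v s)"] by simp
    moreover have "snd (v s) \<le> 1" using pos[OF s] by (cases "v s") (simp add: ZZ_def)
    ultimately show ?thesis using hP[OF s] pos[OF s] by auto
  qed
  then have h_range: "h \<in> K \<rightarrow> {-B..1}" by blast
  define T where "T = K \<times> {-B..1}"
  have "(\<lambda>s. (s, h s)) ` K = {p \<in> T. indiff R (staircase (q (fst p)) (snd p)) (v (fst p))}"
  proof (intro equalityI subsetI)
    fix p assume p: "p \<in> {p \<in> T. indiff R (staircase (q (fst p)) (snd p)) (v (fst p))}"
    then have K: "fst p \<in> K" by (auto simp: T_def)
    then have "snd p = h (fst p)"
      using staircase_indiff_unique[OF R] pos[OF K] hP[OF K] p by blast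
    then show "p \<in> (\<lambda>s. (s, h s)) ` K"
      using K by (intro image_eqI[of _ _ "fst p"]) (auto simp: prod_eq_iff)
  qed (use hP h_range in \<open>auto simp: T_def\<close>)
  moreover have "closed {p \<in> T. indiff R (staircase (q (fst p)) (snd p)) (v (fst p))}"
    unfolding T_def staircase_def
    by (intro closed_indiff_set[OF R] closed_Times compact_imp_closed K closed_atLeastAtMost
        continuous_intros continuous_on_compose2[OF q continuous_on_fst]
        continuous_on_compose2[OF v continuous_on_fst]) auto
  ultimately have "continuous_on K h"
    using continuous_from_closed_graph[OF compact_Icc h_range] by simp
  then show ?thesis using that hP by blast
qed

section \<open>Linearity of the single-crossing order\<close>

lemma convex_comb_less:
  fixes a b c d s :: real
  assumes "a < c" "b < d" "0 \<le> s" "s \<le> 1"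
  shows "(1 - s) * a + s * b < (1 - s) * c + s * d"
proof (cases "s = 0")
  case False
  then have "s * b < s * d" using assms by (intro mult_strict_left_mono) auto
  moreover have "(1 - s) * a \<le> (1 - s) * c" using assms by (intro mult_left_mono) auto
  ultimately show ?thesis by linarith
qed (use assms in simp)

lemma convex_comb_le:
  fixes a b c d s :: real
  assumes "a \<le> c" "b \<le> d" "0 \<le> s" "s \<le> 1"
  shows "(1 - s) * a + s * b \<le> (1 - s) * c + s * d"
  using assms by (intro add_mono mult_left_mono) auto

lemma staircase_indiff_compare:
  assumes R1: "classical R1" and R2: "classical R2" and t: "0 \<le> t" and q: "0 \<le> q"
    and x: "(t, q) \<in> ZZ" and z: "z \<in> ZZ" and I: "indiff R1 (staircase q l) z"
  shows "R2 (t, q) z \<Longrightarrow> \<not> R1 (t, q) z \<Longrightarrow> R2 (staircase q l) z"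
    and "R1 (t, q) z \<Longrightarrow> \<not> R2 (t, q) z \<Longrightarrow> R2 z (staircase q l)"
proof -
  have stair_x: "staircase q (- t) = (t, q)" using staircase_neg[OF t] .
  have lZ: "staircase q l \<in> ZZ" using indiff_in_ZZ[OF R1 I] by blast
  show "R2 (staircase q l) z" if "R2 (t, q) z" "\<not> R1 (t, q) z"
  proof -
    have "\<not> l \<le> - t"
    proof
      assume "l \<le> - t"
      then have "R1 (t, q) (staircase q l)" using staircase_weak[OF R1 q, of l "- t"] x stair_x by simp
      then show False using I that classical_trans[OF R1] unfolding indiff_def by blast
    qed
    then have "R2 (staircase q l) (t, q)" using staircase_weak[OF R2 q, of "- t" l] lZ stair_x by simp
    then show ?thesis using that classical_trans[OF R2] by blast
  qed
  show "R2 z (staircase q l)" if "R1 (t, q) z" "\<not> R2 (t, q) z"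
  proof -
    have "l \<le> - t"
    proof (rule ccontr)
      assume "\<not> l \<le> - t"
      then have "\<not> R1 (t, q) (staircase q l)"
        using staircase_strict[OF R1 q, of "- t" l] lZ stair_x by simp
      then show False using I that classical_trans[OF R1] unfolding indiff_def by blast
    qed
    then have "R2 (t, q) (staircase q l)" using staircase_weak[OF R2 q, of l "- t"] x stair_x by simp
    moreover have "R2 z (t, q)" using that classical_total[OF R2 x z] by blast
    ultimately show ?thesis using classical_trans[OF R2] by blast
  qed
qed

text \<open>Along the segment from \<open>z\<close> to \<open>z'\<close> follow the \<open>R\<^sub>1\<close>-indifferent point \<open>u s\<close> on the
  staircase through \<open>x\<close> resp. \<open>x'\<close>.  Its \<open>R\<^sub>2\<close>-comparison with \<open>v s\<close> switches between the ends, so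
  for some \<open>s\<close> the distinct bundles \<open>u s\<close>, \<open>v s\<close> are indifferent for both preferences.\<close>
lemma single_crossing_no_reversal:
  assumes R1: "classical R1" and R2: "classical R2" and sc: "single_crossing R1 R2"
    and xZ: "x \<in> ZZ" and zZ: "z \<in> ZZ" and xz: "lessZ x z" and R2xz: "R2 x z" and R1xz: "\<not> R1 x z"
    and xZ': "x' \<in> ZZ" and zZ': "z' \<in> ZZ" and xz': "lessZ x' z'"
    and R1xz': "R1 x' z'" and R2xz': "\<not> R2 x' z'"
  shows False
proof -
  obtain tx qx tz qz tx' qx' tz' qz' where
    coords: "x = (tx, qx)" "z = (tz, qz)" "x' = (tx', qx')" "z' = (tz', qz')"
    by (cases x, cases z, cases x', cases z')
  have h: "0 \<le> tx" "tx < tz" "0 \<le> qx" "qx < qz" "qz \<le> 1"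
    "0 \<le> tx'" "tx' < tz'" "0 \<le> qx'" "qx' < qz'" "qz' \<le> 1"
    using xZ zZ xz xZ' zZ' xz' by (auto simp: coords ZZ_def lessZ_def)
  define v where "v s = ((1 - s) * tz + s * tz', (1 - s) * qz + s * qz')" for s :: real
  define q where "q s = (1 - s) * qx + s * qx'" for s :: real
  have pos: "v s \<in> ZZ \<and> 0 < fst (v s) \<and> 0 \<le> q s \<and> q s < snd (v s)" if "s \<in> {0..1}" for s
    using that h convex_comb_less[of 0 tz 0 tz' s] convex_comb_le[of 0 qx 0 qx' s]
      convex_comb_less[of qx qz qx' qz' s] convex_comb_le[of qz 1 qz' 1 s]
    by (auto simp: v_def q_def ZZ_def)
  have cont_v: "continuous_on {0..1} v" and cont_q: "continuous_on {0..1} q"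
    unfolding v_def q_def by (intro continuous_intros)+
  then obtain h where cont_h: "continuous_on {0..1} h" and hP: "\<And>s. s \<in> {0..1} \<Longrightarrow>
      - fst (v s) < h s \<and> h s < snd (v s) - q s \<and> indiff R1 (staircase (q s) (h s)) (v s)"
    using continuous_indiff_level[OF R1 compact_Icc cont_v cont_q pos] by blast
  define u where "u s = staircase (q s) (h s)" for s
  have cont_u: "continuous_on {0..1} u"
    unfolding u_def staircase_def q_def by (intro continuous_intros cont_h)
  have I1: "indiff R1 (u s) (v s)" if "s \<in> {0..1}" for s
    using hP[OF that] by (simp add: u_def)
  have uZ: "u s \<in> ZZ" if "s \<in> {0..1}" for s
    using indiff_in_ZZ[OF R1 I1[OF that]] by blast
  have ends: "v 0 = z" "q 0 = qx" "v 1 = z'" "q 1 = qx'"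
    by (auto simp: v_def q_def coords)
  have "R2 (u 0) (v 0)"
    using staircase_indiff_compare(1)[OF R1 R2 h(1,3) xZ[unfolded coords] zZ] I1[of 0]
      R2xz R1xz ends by (auto simp: coords u_def)
  moreover have "R2 (v 1) (u 1)"
    using staircase_indiff_compare(2)[OF R1 R2 h(6,8) xZ'[unfolded coords] zZ'] I1[of 1]
      R1xz' R2xz' ends by (auto simp: coords u_def)
  ultimately obtain s where s: "s \<in> {0..1}" and I2: "indiff R2 (u s) (v s)"
    using classical_indiff_on_path[OF R2 _ cont_u cont_v] pos uZ by fastforce
  have "u s \<noteq> v s"
    using hP[OF s] pos[OF s] by (auto simp: u_def staircase_def prod_eq_iff)
  moreover have "indiff R1 (v s) (v s)" "indiff R2 (v s) (v s)"
    using classical_refl[OF R1] classical_refl[OF R2] pos[OF s] by (auto simp: indiff_def)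
  ultimately show False
    using sc uZ[OF s] pos[OF s] I1[OF s] I2 unfolding single_crossing_def by blast
qed

lemma classical_prec_linear:
  assumes R1: "classical R1" and R2: "classical R2" and sc: "single_crossing R1 R2"
    and "R1 \<noteq> R2"
  shows "prec R1 R2 \<or> prec R2 R1"
proof (rule ccontr)
  assume "\<not> (prec R1 R2 \<or> prec R2 R1)"
  then obtain z x z' x' where zZ: "z \<in> ZZ" and "x \<in> boxZ z" "R2 x z" "\<not> R1 x z"
    and zZ': "z' \<in> ZZ" and "x' \<in> boxZ z'" "R1 x' z'" "\<not> R2 x' z'"
    using \<open>R1 \<noteq> R2\<close> unfolding prec_def by blast
  moreover from this have "x \<in> ZZ" "lessZ x z" "x' \<in> ZZ" "lessZ x' z'"
    using classical_refl[OF R1 zZ] classical_refl[OF R2 zZ'] unfolding boxZ_def leZ_def by auto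
  ultimately show False using single_crossing_no_reversal[OF R1 R2 sc] by blast
qed

section \<open>Monotone mechanisms on an interval of indices\<close>

lemma leZ_antisym: "leZ a b \<Longrightarrow> leZ b a \<Longrightarrow> a = b"
  unfolding leZ_def lessZ_def by auto

lemma leZ_neq_imp_lessZ: "leZ a b \<Longrightarrow> a \<noteq> b \<Longrightarrow> lessZ a b"
  unfolding leZ_def by auto

lemma lessZ_not_leZ: "lessZ a b \<Longrightarrow> \<not> leZ b a"
  unfolding leZ_def lessZ_def by auto

lemma monotone_seq_tendsto_from_side:
  fixes s b :: real
  assumes "s \<noteq> b"
  obtains nu where "nu \<longlonglongrightarrow> s" and "incseq nu \<or> decseq nu"
    and "\<And>n. nu n \<in> {min s b..max s b} - {s}"
proof
  define nu where "nu = (\<lambda>n. s + (b - s) * inverse (real (Suc n)))"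
  have "(\<lambda>n. s + (b - s) * inverse (real (Suc n))) \<longlonglongrightarrow> s + (b - s) * 0"
    by (intro tendsto_intros LIMSEQ_inverse_real_of_nat)
  then show "nu \<longlonglongrightarrow> s" by (simp add: nu_def)
  have inv: "0 < inverse (real (Suc n))" "inverse (real (Suc n)) \<le> 1"
    "inverse (real (Suc (Suc n))) \<le> inverse (real (Suc n))" for n
    by (auto simp: field_simps)
  show "incseq nu \<or> decseq nu"
  proof (cases "s < b")
    case True
    then have "decseq nu" unfolding decseq_Suc_iff nu_def using inv by (auto intro!: mult_left_mono)
    then show ?thesis ..
  next
    case False
    then have "incseq nu"
      unfolding incseq_Suc_iff nu_def using inv by (auto intro!: mult_left_mono_neg)
    then show ?thesis ..
  qed
  have "s + (b - s) * e \<in> {min s b..max s b} - {s}" if "0 < e" "e \<le> 1" for e :: real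
  proof (cases "s < b")
    case True
    have "0 < (b - s) * e" using that True by simp
    moreover have "(b - s) * e \<le> b - s" using mult_left_mono[of e 1 "b - s"] that True by simp
    ultimately
    have "s < s + (b - s) * e" "s + (b - s) * e \<le> b" by linarith+
    with True that show ?thesis by (simp add: min_def max_def)
  next
    case False
    have "(b - s) * e < 0" using that False assms by (simp add: mult_neg_pos)
    moreover have "b - s \<le> (b - s) * e"
      using mult_left_mono_neg[of e 1 "b - s"] that False by simp
    ultimately have "s + (b - s) * e < s" "b \<le> s + (b - s) * e" by linarith+
    with False that show ?thesis by (simp add: min_def max_def)
  qed
  then show "nu n \<in> {min s b..max s b} - {s}" for n
    using inv(1,2)[of n] unfolding nu_def by blast
qed

text \<open>A rich single-crossing domain transported to an interval of reals by its index:
  \<open>P m\<close> is the preference with index \<open>m\<close> and \<open>G m\<close> its outcome.\<close>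
locale index_mechanism =
  fixes Lam :: "real set" and P :: "real \<Rightarrow> pref" and G :: "real \<Rightarrow> bndl"
  assumes interval: "a \<in> Lam \<Longrightarrow> b \<in> Lam \<Longrightarrow> {a..b} \<subseteq> Lam"
    and classical: "m \<in> Lam \<Longrightarrow> classical (P m)"
    and in_ZZ: "m \<in> Lam \<Longrightarrow> G m \<in> ZZ"
    and weak_prefers:
      "m \<in> Lam \<Longrightarrow> m' \<in> Lam \<Longrightarrow> m \<le> m' \<Longrightarrow> lessZ x z \<Longrightarrow> P m' x z \<Longrightarrow> P m x z"
    and indiff_strict:
      "m \<in> Lam \<Longrightarrow> m' \<in> Lam \<Longrightarrow> m < m' \<Longrightarrow> lessZ x z \<Longrightarrow> indiff (P m) x z \<Longrightarrow> \<not> P m' x z"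
    and mono: "m \<in> Lam \<Longrightarrow> m' \<in> Lam \<Longrightarrow> m \<le> m' \<Longrightarrow> leZ (G m) (G m')"
    and finite_range: "finite (G ` Lam)"
    and continuous: "m \<in> Lam \<Longrightarrow> (\<And>n. nu n \<in> Lam) \<Longrightarrow> incseq nu \<or> decseq nu \<Longrightarrow> nu \<longlonglongrightarrow> m \<Longrightarrow>
      \<exists>L. (\<lambda>n. G (nu n)) \<longlonglongrightarrow> L \<and> indiff (P m) L (G m)"
begin

lemma two_valued_threshold:
  assumes m1: "m1 \<in> Lam" and m2: "m2 \<in> Lam" and "m1 \<le> m2" and ne: "G m1 \<noteq> G m2"
    and two: "\<And>m. m \<in> {m1..m2} \<Longrightarrow> G m = G m1 \<or> G m = G m2"
  obtains s where "s \<in> {m1..m2}"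
    and "\<And>x. m1 \<le> x \<Longrightarrow> x < s \<Longrightarrow> G x = G m1"
    and "\<And>x. s < x \<Longrightarrow> x \<le> m2 \<Longrightarrow> G x = G m2"
proof
  define K where "K = {m \<in> {m1..m2}. G m = G m1}"
  have m1K: "m1 \<in> K" and bdd: "bdd_above K"
    using \<open>m1 \<le> m2\<close> by (auto simp: K_def intro: bdd_aboveI[of _ m2])
  have "Sup K \<le> m2" by (rule cSup_least) (use m1K in \<open>auto simp: K_def\<close>)
  then show "Sup K \<in> {m1..m2}" using cSup_upper[OF m1K bdd] by simp
  show "G x = G m1" if x: "m1 \<le> x" "x < Sup K" for x
  proof -
    obtain k where k: "k \<in> K" "x < k" using less_cSup_iff[OF _ bdd] m1K x by auto
    then have kI: "k \<in> {m1..m2}" and Gk: "G k = G m1" and x: "x \<in> {m1..m2}"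
      using x by (auto simp: K_def)
    moreover have "x \<in> Lam" "k \<in> Lam" using interval[OF m1 m2] kI x by auto
    ultimately have "leZ (G x) (G m1)" using mono[of x k] k by auto
    then show ?thesis using two[OF x] mono[OF m1 m2 \<open>m1 \<le> m2\<close>] ne leZ_antisym by metis
  qed
  show "G x = G m2" if x: "Sup K < x" "x \<le> m2" for x
  proof -
    have "x \<in> {m1..m2}" using x cSup_upper[OF m1K bdd] by auto
    moreover have "x \<notin> K" using cSup_upper[OF _ bdd, of x] x by auto
    ultimately show ?thesis using two unfolding K_def by blast
  qed
qed

lemma indiff_limit_from_side:
  assumes s: "s \<in> Lam" and b: "b \<in> Lam" and "s \<noteq> b"
    and const: "\<And>x. x \<in> {min s b..max s b} - {s} \<Longrightarrow> G x = c"
  shows "indiff (P s) c (G s)"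
proof -
  obtain nu where lim: "nu \<longlonglongrightarrow> s" and mono_nu: "incseq nu \<or> decseq nu"
    and nu: "\<And>n. nu n \<in> {min s b..max s b} - {s}"
    using monotone_seq_tendsto_from_side[OF \<open>s \<noteq> b\<close>] by blast
  have "nu n \<in> Lam" for n
    using nu[of n] interval[OF s b] interval[OF b s] by (auto simp: min_def max_def split: if_splits)
  then obtain L where L: "(\<lambda>n. G (nu n)) \<longlonglongrightarrow> L" "indiff (P s) L (G s)"
    using continuous[OF s _ mono_nu lim] by blast
  have "(\<lambda>n. G (nu n)) = (\<lambda>n. c)" using const nu by auto
  then have "L = c" using L(1) LIMSEQ_unique[OF tendsto_const] by metis
  then show ?thesis using L(2) by simp
qed

lemma two_valued_indiff:
  assumes m1: "m1 \<in> Lam" and m2: "m2 \<in> Lam" and le: "m1 \<le> m2" and ne: "G m1 \<noteq> G m2"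
    and two: "\<And>m. m \<in> {m1..m2} \<Longrightarrow> G m = G m1 \<or> G m = G m2"
  shows "\<exists>s\<in>{m1..m2}. indiff (P s) (G m1) (G m2)"
proof -
  obtain s where sI: "s \<in> {m1..m2}"
    and below: "\<And>x. m1 \<le> x \<Longrightarrow> x < s \<Longrightarrow> G x = G m1"
    and above: "\<And>x. s < x \<Longrightarrow> x \<le> m2 \<Longrightarrow> G x = G m2"
    using two_valued_threshold[OF m1 m2 le ne two] by blast
  have s: "s \<in> Lam" using interval[OF m1 m2] sI by auto
  consider "G s = G m1" | "G s = G m2" using two[OF sI] by blast
  then show ?thesis
  proof cases
    case 1
    then have "s \<noteq> m2" using ne by auto
    then have "indiff (P s) (G m2) (G s)"
      using sI by (intro indiff_limit_from_side[OF s m2]) (auto intro: above)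
    then show ?thesis using 1 sI unfolding indiff_def by auto
  next
    case 2
    then have "s \<noteq> m1" using ne by auto
    then have "indiff (P s) (G m1) (G s)"
      using sI by (intro indiff_limit_from_side[OF s m1]) (auto intro: below)
    then show ?thesis using 2 sI by auto
  qed
qed

lemma no_envy_two_valued:
  assumes m1: "m1 \<in> Lam" and m2: "m2 \<in> Lam" and le: "m1 \<le> m2"
    and two: "\<And>m. m \<in> {m1..m2} \<Longrightarrow> G m = G m1 \<or> G m = G m2"
  shows "P m1 (G m1) (G m2) \<and> P m2 (G m2) (G m1)"
proof (cases "G m1 = G m2")
  case True
  then show ?thesis using classical_refl classical in_ZZ m1 m2 by metis
next
  case False
  have less: "lessZ (G m1) (G m2)" using mono[OF m1 m2 le] False leZ_neq_imp_lessZ by blast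
  obtain s where sI: "s \<in> {m1..m2}" and I: "indiff (P s) (G m1) (G m2)"
    using two_valued_indiff[OF m1 m2 le False two] by blast
  have s: "s \<in> Lam" using interval[OF m1 m2] sI by auto
  have "P m1 (G m1) (G m2)"
    using weak_prefers[OF m1 s _ less] I sI unfolding indiff_def by auto
  moreover have "P m2 (G m2) (G m1)"
  proof (cases "s = m2")
    case True
    then show ?thesis using I unfolding indiff_def by simp
  next
    case False
    then have "\<not> P m2 (G m1) (G m2)" using indiff_strict[OF s m2 _ less I] sI by auto
    then show ?thesis using classical_total[OF classical[OF m2] in_ZZ[OF m1] in_ZZ[OF m2]] by blast
  qed
  ultimately show ?thesis ..
qed

lemma no_envy_split:
  assumes m1: "m1 \<in> Lam" and m2: "m2 \<in> Lam" and mI: "m \<in> {m1..m2}"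
    and ab: "lessZ (G m1) (G m)" and bc: "lessZ (G m) (G m2)"
    and left: "P m1 (G m1) (G m) \<and> P m (G m) (G m1)"
    and right: "P m (G m) (G m2) \<and> P m2 (G m2) (G m)"
  shows "P m1 (G m1) (G m2) \<and> P m2 (G m2) (G m1)"
proof -
  have m: "m \<in> Lam" using interval[OF m1 m2] mI by auto
  have "P m1 (G m) (G m2)" using weak_prefers[OF m1 m _ bc] right mI by auto
  then have "P m1 (G m1) (G m2)" using left classical_trans[OF classical[OF m1]] by blast
  moreover have "\<not> P m2 (G m1) (G m)"
  proof (cases "P m (G m1) (G m)")
    case True
    have "m \<noteq> m2" using bc by (auto simp: lessZ_def)
    then show ?thesis
      using indiff_strict[OF m m2 _ ab] True left mI unfolding indiff_def by auto
  next
    case False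
    then show ?thesis using weak_prefers[OF m m2 _ ab] mI by auto
  qed
  then have "P m2 (G m) (G m1)"
    using classical_total[OF classical[OF m2] in_ZZ[OF m1] in_ZZ[OF m]] by blast
  then have "P m2 (G m2) (G m1)" using right classical_trans[OF classical[OF m2]] by blast
  ultimately show ?thesis ..
qed

lemma card_range_shrinks:
  assumes m1: "m1 \<in> Lam" and m2: "m2 \<in> Lam" and mI: "m \<in> {m1..m2}"
  shows "lessZ (G m) (G m2) \<Longrightarrow> card (G ` {m1..m}) < card (G ` {m1..m2})"
    and "lessZ (G m1) (G m) \<Longrightarrow> card (G ` {m..m2}) < card (G ` {m1..m2})"
proof -
  have fin: "finite (G ` {m1..m2})"
    using finite_subset[OF _ finite_range] interval[OF m1 m2] by blast
  have m: "m \<in> Lam" using interval[OF m1 m2] mI by auto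
  show "card (G ` {m1..m}) < card (G ` {m1..m2})" if less: "lessZ (G m) (G m2)"
  proof (rule psubset_card_mono[OF fin])
    have "G m2 \<notin> G ` {m1..m}"
      using mono[OF _ m] interval[OF m1 m] lessZ_not_leZ[OF less] by fastforce
    then show "G ` {m1..m} \<subset> G ` {m1..m2}" using mI by fastforce
  qed
  show "card (G ` {m..m2}) < card (G ` {m1..m2})" if less: "lessZ (G m1) (G m)"
  proof (rule psubset_card_mono[OF fin])
    have "G m1 \<notin> G ` {m..m2}"
      using mono[OF m] interval[OF m m2] lessZ_not_leZ[OF less] by fastforce
    then show "G ` {m..m2} \<subset> G ` {m1..m2}" using mI by fastforce
  qed
qed

theorem no_envy:
  assumes "m1 \<in> Lam" and "m2 \<in> Lam" and "m1 \<le> m2"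
  shows "P m1 (G m1) (G m2) \<and> P m2 (G m2) (G m1)"
  using assms
proof (induction "card (G ` {m1..m2})" arbitrary: m1 m2 rule: less_induct)
  case less
  show ?case
  proof (cases "\<exists>m\<in>{m1..m2}. G m \<noteq> G m1 \<and> G m \<noteq> G m2")
    case True
    then obtain m where mI: "m \<in> {m1..m2}" and "G m \<noteq> G m1" "G m \<noteq> G m2" by blast
    moreover have "m \<in> Lam" using interval less.prems mI by blast
    ultimately have ab: "lessZ (G m1) (G m)" and bc: "lessZ (G m) (G m2)"
      using mono less.prems leZ_neq_imp_lessZ by auto
    show ?thesis
      using no_envy_split[OF less.prems(1,2) mI ab bc]
        less.hyps[OF card_range_shrinks(1)[OF less.prems(1,2) mI bc]]
        less.hyps[OF card_range_shrinks(2)[OF less.prems(1,2) mI ab]]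
        \<open>m \<in> Lam\<close> less.prems mI by auto
  next
    case False
    then show ?thesis using no_envy_two_valued less.prems by blast
  qed
qed

end

section \<open>The index of a preference\<close>

text \<open>A classical preference is pinned down, inside a single-crossing family, by where its indifference
  curve through \<open>(1, 1)\<close> meets the staircase through the origin.\<close>
definition pref_index :: "pref \<Rightarrow> real" where
  "pref_index R = (THE l. -1 < l \<and> l < 1 \<and> indiff R (staircase 0 l) (1, 1))"

lemma one_one_in_ZZ: "(1, 1) \<in> ZZ"
  by (simp add: ZZ_def)

lemma staircase_zero_less: "-1 < l \<Longrightarrow> l < 1 \<Longrightarrow> lessZ (staircase 0 l) (1, 1)"
  by (auto simp: staircase_def lessZ_def)

lemma pref_index:
  assumes R: "classical R"
  shows "-1 < pref_index R \<and> pref_index R < 1 \<and> indiff R (staircase 0 (pref_index R)) (1, 1)"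
proof -
  have "\<exists>!l. -1 < l \<and> l < 1 \<and> indiff R (staircase 0 l) (1, 1)"
    using staircase_indiff_ex1[OF R one_one_in_ZZ, of 0] by simp
  then show ?thesis unfolding pref_index_def by (rule theI')
qed

lemma pref_index_eq:
  assumes R: "classical R" and I: "indiff R (staircase 0 l) (1, 1)"
  shows "pref_index R = l"
  using staircase_indiff_unique[OF R order_refl _ I] pref_index[OF R] by blast

lemma prec_weak_prefers:
  assumes "prec R R'" and "lessZ x z" and "R' x z" and "z \<in> ZZ" and "x \<in> ZZ"
  shows "R x z"
  using assms unfolding prec_def boxZ_def leZ_def by blast

context
  fixes D :: "pref set"
  assumes rsc: "rich_single_crossing D"
begin

lemma rsc_classical: "R \<in> D \<Longrightarrow> classical R"
  using rsc unfolding rich_single_crossing_def by blast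

lemma rsc_indiff_unique:
  assumes R: "R \<in> D" and R': "R' \<in> D" and x: "x \<in> ZZ" and y: "y \<in> ZZ" and "x \<noteq> y"
    and "indiff R x y" and "indiff R' x y"
  shows "R = R'"
proof (rule ccontr)
  assume "R \<noteq> R'"
  then have "single_crossing R R'" using rsc R R' unfolding rich_single_crossing_def by blast
  moreover have "indiff R y y" "indiff R' y y"
    using classical_refl[OF rsc_classical[OF R] y] classical_refl[OF rsc_classical[OF R'] y]
    by (auto simp: indiff_def)
  ultimately show False using assms unfolding single_crossing_def by blast
qed

lemma inj_on_pref_index: "inj_on pref_index D"
proof (rule inj_onI)
  fix R R' assume R: "R \<in> D" and R': "R' \<in> D" and eq: "pref_index R = pref_index R'"
  let ?y = "staircase 0 (pref_index R)"
  have I: "-1 < pref_index R \<and> pref_index R < 1 \<and> indiff R ?y (1, 1)"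
    using pref_index[OF rsc_classical[OF R]] .
  moreover have "indiff R' ?y (1, 1)" using pref_index[OF rsc_classical[OF R']] eq by simp
  moreover have "?y \<in> ZZ" using I indiff_in_ZZ[OF rsc_classical[OF R]] by blast
  moreover have "?y \<noteq> (1, 1)" using staircase_zero_less[of "pref_index R"] I by (auto simp: lessZ_def)
  ultimately show "R = R'" using rsc_indiff_unique[OF R R' _ one_one_in_ZZ] by blast
qed

lemma prec_imp_pref_index_less:
  assumes R: "R \<in> D" and R': "R' \<in> D" and pr: "prec R R'"
  shows "pref_index R < pref_index R'"
proof -
  have cR: "classical R" using rsc_classical[OF R] .
  define y where "y = staircase 0 (pref_index R')"
  have I: "indiff R (staircase 0 (pref_index R)) (1, 1)" and I': "indiff R' y (1, 1)"
    using pref_index[OF cR] pref_index[OF rsc_classical[OF R']] by (auto simp: y_def)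
  have "lessZ y (1, 1)" using staircase_zero_less pref_index[OF rsc_classical[OF R']] by (simp add: y_def)
  then have "R y (1, 1)"
    using prec_weak_prefers[OF pr] I' indiff_in_ZZ[OF rsc_classical[OF R'] I'] one_one_in_ZZ
    unfolding indiff_def by blast
  then have "R y (staircase 0 (pref_index R))" using I classical_trans[OF cR] unfolding indiff_def by blast
  then have "\<not> pref_index R' < pref_index R"
    using staircase_strict[OF cR, of 0] indiff_in_ZZ[OF cR I] by (auto simp: y_def)
  moreover have "pref_index R \<noteq> pref_index R'"
    using pr inj_on_pref_index R R' unfolding prec_def by (metis inj_onD)
  ultimately show ?thesis by linarith
qed

lemma pref_index_less_imp_prec:
  assumes R: "R \<in> D" and R': "R' \<in> D" and lt: "pref_index R < pref_index R'"
  shows "prec R R'"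
proof -
  have ne: "R \<noteq> R'" using lt by auto
  then have "single_crossing R R'" using rsc R R' unfolding rich_single_crossing_def by blast
  then have "prec R R' \<or> prec R' R"
    using classical_prec_linear[OF rsc_classical[OF R] rsc_classical[OF R'] _ ne] by blast
  then show ?thesis using prec_imp_pref_index_less[OF R' R] lt by linarith
qed

lemma preceq_iff_pref_index_le:
  assumes R: "R \<in> D" and R': "R' \<in> D"
  shows "preceq R R' \<longleftrightarrow> pref_index R \<le> pref_index R'"
proof
  show "preceq R R' \<Longrightarrow> pref_index R \<le> pref_index R'"
    using prec_imp_pref_index_less[OF R R'] unfolding preceq_def by auto
  assume "pref_index R \<le> pref_index R'"
  then consider "pref_index R = pref_index R'" | "pref_index R < pref_index R'" by linarith
  then show "preceq R R'"
    using inj_onD[OF inj_on_pref_index _ R R'] pref_index_less_imp_prec[OF R R']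
    unfolding preceq_def by cases auto
qed

lemma pref_index_surj:
  assumes "-1 < l" "l < 1"
  shows "\<exists>R\<in>D. pref_index R = l"
proof -
  have "staircase 0 l \<in> ZZ" using assms by (intro staircase_in_ZZ) auto
  then obtain R where "R \<in> D" "indiff R (staircase 0 l) (1, 1)"
    using rsc one_one_in_ZZ staircase_zero_less[OF assms] unfolding rich_single_crossing_def by blast
  then show ?thesis using pref_index_eq[OF rsc_classical] by blast
qed

text \<open>The closedness of \<open>R'\<close>'s contour sets lets us push \<open>x\<close> slightly to the right and still be
  \<open>R'\<close>-preferred to \<open>z\<close>; the pushed bundle lies in the box below \<open>z\<close>, where \<open>R\<close> is more demanding.\<close>
lemma prec_indiff_imp_strict:
  assumes R: "R \<in> D" and R': "R' \<in> D" and pr: "prec R R'"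
    and xZ: "x \<in> ZZ" and zZ: "z \<in> ZZ" and xz: "lessZ x z" and I: "indiff R x z"
  shows "\<not> R' x z"
proof
  assume xz': "R' x z"
  have cR: "classical R" and cR': "classical R'" using rsc_classical R R' by auto
  have "\<not> R' z x"
  proof
    assume "R' z x"
    then have "indiff R' x z" using xz' by (simp add: indiff_def)
    moreover have "x \<noteq> z" using xz by (auto simp: lessZ_def)
    moreover have "R \<noteq> R'" using pr unfolding prec_def by simp
    ultimately show False using rsc_indiff_unique[OF R R' xZ zZ _ I] by blast
  qed
  define xs where "xs n = (fst x + inverse (real (Suc n)), snd x)" for n
  have xsZ: "xs n \<in> ZZ" for n
    using xZ by (cases x) (auto simp: xs_def ZZ_def intro: add_nonneg_nonneg)
  have "xs \<longlonglongrightarrow> (fst x + 0, snd x)"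
    unfolding xs_def by (intro tendsto_Pair tendsto_add tendsto_const LIMSEQ_inverse_real_of_nat)
  then have lim: "xs \<longlonglongrightarrow> x" by simp
  have e1: "eventually (\<lambda>n. \<not> R' z (xs n)) sequentially"
    using classical_eventually_not_prefers(2)[OF cR' zZ xsZ lim \<open>\<not> R' z x\<close>] .
  have e2: "eventually (\<lambda>n. fst (xs n) < fst z) sequentially"
    using tendsto_fst[OF lim] xz unfolding lessZ_def by (intro order_tendstoD) auto
  from eventually_conj[OF e1 e2] obtain n where n1: "\<not> R' z (xs n)" and n2: "fst (xs n) < fst z"
    using eventually_sequentially by auto
  have "R' (xs n) z" using n1 classical_total[OF cR' xsZ zZ] by blast
  moreover have "lessZ (xs n) z" using n2 xz unfolding lessZ_def xs_def by auto
  ultimately have "R (xs n) x"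
    using prec_weak_prefers[OF pr] xsZ zZ I classical_trans[OF cR] unfolding indiff_def by blast
  moreover have "\<not> R (xs n) x"
    by (rule classical_not_prefers_dominated[OF cR xZ xsZ]) (auto simp: xs_def prod_eq_iff)
  ultimately show False by simp
qed

lemma domain_or_interval_order_convex:
  assumes "S = D \<or> (\<exists>Rlo\<in>D. \<exists>Rhi\<in>D. S = closed_interval D Rlo Rhi)"
  shows "S \<subseteq> D"
    and "R1 \<in> S \<Longrightarrow> R2 \<in> S \<Longrightarrow> R \<in> D \<Longrightarrow> preceq R1 R \<Longrightarrow> preceq R R2 \<Longrightarrow> R \<in> S"
proof -
  show "S \<subseteq> D" using assms unfolding closed_interval_def by auto
  assume R1: "R1 \<in> S" and R2: "R2 \<in> S" and R: "R \<in> D" and "preceq R1 R" "preceq R R2"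
  with \<open>S \<subseteq> D\<close> have "pref_index R1 \<le> pref_index R" "pref_index R \<le> pref_index R2"
    using preceq_iff_pref_index_le by auto
  then have "preceq Rlo R \<and> preceq R Rhi"
    if "Rlo \<in> D" "Rhi \<in> D" "preceq Rlo R1" "preceq R2 Rhi" for Rlo Rhi
    using that R1 R2 R \<open>S \<subseteq> D\<close> preceq_iff_pref_index_le by force
  then show "R \<in> S" using assms R R1 R2 unfolding closed_interval_def by blast
qed

lemma pref_index_image_interval:
  assumes SD: "S \<subseteq> D"
    and convex: "\<And>R1 R2 R. R1 \<in> S \<Longrightarrow> R2 \<in> S \<Longrightarrow> R \<in> D \<Longrightarrow> preceq R1 R \<Longrightarrow> preceq R R2 \<Longrightarrow> R \<in> S"
    and a: "a \<in> pref_index ` S" and b: "b \<in> pref_index ` S"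
  shows "{a..b} \<subseteq> pref_index ` S"
proof
  fix c assume c: "c \<in> {a..b}"
  obtain Ra Rb where Ra: "Ra \<in> S" "pref_index Ra = a" and Rb: "Rb \<in> S" "pref_index Rb = b"
    using a b by auto
  have "-1 < c" "c < 1" using pref_index[OF rsc_classical] Ra Rb SD c by force+
  then obtain R where R: "R \<in> D" "pref_index R = c" using pref_index_surj by blast
  then have "preceq Ra R" "preceq R Rb"
    using preceq_iff_pref_index_le Ra Rb SD c by auto
  then show "c \<in> pref_index ` S" using convex[OF Ra(1) Rb(1) R(1)] R(2) by blast
qed

lemma order_converges_of_pref_index:
  assumes SD: "S \<subseteq> D" and Rs: "\<And>n. Rs n \<in> S" and R: "R \<in> S"
    and lim: "(\<lambda>n. pref_index (Rs n)) \<longlonglongrightarrow> pref_index R"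
  shows "order_converges S Rs R"
  unfolding order_converges_def
proof (intro conjI ballI impI)
  fix A assume "A \<in> S" "prec A R"
  then have "pref_index A < pref_index R" using prec_imp_pref_index_less SD R by blast
  then have "eventually (\<lambda>n. pref_index A < pref_index (Rs n)) sequentially"
    by (rule order_tendstoD(1)[OF lim])
  then show "\<exists>N. \<forall>n\<ge>N. prec A (Rs n)"
    using pref_index_less_imp_prec \<open>A \<in> S\<close> SD Rs
    unfolding eventually_sequentially by (meson subsetD)
next
  fix B assume "B \<in> S" "prec R B"
  then have "pref_index R < pref_index B" using prec_imp_pref_index_less SD R by blast
  then have "eventually (\<lambda>n. pref_index (Rs n) < pref_index B) sequentially"
    by (rule order_tendstoD(2)[OF lim])
  then show "\<exists>N. \<forall>n\<ge>N. prec (Rs n) B"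
    using pref_index_less_imp_prec \<open>B \<in> S\<close> SD Rs
    unfolding eventually_sequentially by (meson subsetD)
qed

lemma monotone_seq_of_pref_index:
  assumes Rs: "\<And>n. Rs n \<in> D"
    and "incseq (\<lambda>n. pref_index (Rs n)) \<or> decseq (\<lambda>n. pref_index (Rs n))"
  shows "monotone_seq Rs"
  using assms(2) preceq_iff_pref_index_le[OF Rs Rs]
  unfolding monotone_seq_def incseq_Suc_iff decseq_Suc_iff by blast

lemma index_mechanism_pref_index:
  assumes SD: "S \<subseteq> D"
    and convex: "\<And>R1 R2 R. R1 \<in> S \<Longrightarrow> R2 \<in> S \<Longrightarrow> R \<in> D \<Longrightarrow> preceq R1 R \<Longrightarrow> preceq R R2 \<Longrightarrow> R \<in> S"
    and F: "mechanism S F" "monotone_mech S F" "VF_continuous S F" "finite (F ` S)"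
  shows "index_mechanism (pref_index ` S) (the_inv_into S pref_index) (F \<circ> the_inv_into S pref_index)"
proof -
  let ?inv = "the_inv_into S pref_index"
  have inj: "inj_on pref_index S" using inj_on_subset[OF inj_on_pref_index SD] .
  have inv: "?inv m \<in> S" "pref_index (?inv m) = m" if "m \<in> pref_index ` S" for m
    using the_inv_into_into[OF inj that order_refl] f_the_inv_into_f[OF inj that] by auto
  then have invD: "?inv m \<in> D" if "m \<in> pref_index ` S" for m using SD that by blast
  have prec: "prec (?inv m) (?inv m')" if "m \<in> pref_index ` S" "m' \<in> pref_index ` S" "m < m'" for m m'
    using pref_index_less_imp_prec[OF invD invD] inv that by auto
  show ?thesis
  proof
    show "{a..b} \<subseteq> pref_index ` S" if "a \<in> pref_index ` S" "b \<in> pref_index ` S" for a b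
      using pref_index_image_interval[OF SD convex that] .
    show "classical (?inv m)" if "m \<in> pref_index ` S" for m
      using rsc_classical[OF invD[OF that]] .
    show "(F \<circ> ?inv) m \<in> ZZ" if "m \<in> pref_index ` S" for m
      using F(1) inv[OF that] unfolding mechanism_def by auto
    show "?inv m x z" if m: "m \<in> pref_index ` S" and m': "m' \<in> pref_index ` S" and "m \<le> m'"
      and xz: "lessZ x z" and pref: "?inv m' x z" for m m' x z
      using prec[OF m m'] \<open>m \<le> m'\<close> pref prec_weak_prefers[OF _ xz]
        classical_in_ZZ[OF rsc_classical[OF invD[OF m']] pref] by (cases "m = m'") auto
    show "\<not> ?inv m' x z" if m: "m \<in> pref_index ` S" and m': "m' \<in> pref_index ` S" and "m < m'"
      and xz: "lessZ x z" and I: "indiff (?inv m) x z" for m m' x z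
      using prec_indiff_imp_strict[OF invD[OF m] invD[OF m'] prec[OF m m' \<open>m < m'\<close>] _ _ xz I]
        indiff_in_ZZ[OF rsc_classical[OF invD[OF m]] I] by blast
    show "leZ ((F \<circ> ?inv) m) ((F \<circ> ?inv) m')"
      if m: "m \<in> pref_index ` S" and m': "m' \<in> pref_index ` S" and "m \<le> m'" for m m'
      using F(2) prec[OF m m'] inv[OF m] inv[OF m'] \<open>m \<le> m'\<close> unfolding monotone_mech_def
      by (cases "m = m'") (auto simp: leZ_def)
    have "(F \<circ> ?inv) ` pref_index ` S = F ` S" using the_inv_into_f_f[OF inj] by force
    then show "finite ((F \<circ> ?inv) ` pref_index ` S)" using F(4) by simp
    show "\<exists>L. (\<lambda>n. (F \<circ> ?inv) (nu n)) \<longlonglongrightarrow> L \<and> indiff (?inv m) L ((F \<circ> ?inv) m)"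
      if m: "m \<in> pref_index ` S" and nu: "\<And>n. nu n \<in> pref_index ` S"
        and mono: "incseq nu \<or> decseq nu" and lim: "nu \<longlonglongrightarrow> m" for m nu
    proof -
      have "monotone_seq (\<lambda>n. ?inv (nu n))"
        using monotone_seq_of_pref_index[OF invD[OF nu]] mono inv(2)[OF nu] by simp
      moreover have "order_converges S (\<lambda>n. ?inv (nu n)) (?inv m)"
        using order_converges_of_pref_index[OF SD inv(1)[OF nu] inv(1)[OF m]] lim inv(2)[OF nu]
          inv(2)[OF m] by simp
      moreover have "\<forall>n. ?inv (nu n) \<in> S" using inv(1)[OF nu] by blast
      ultimately show ?thesis
        using spec[OF bspec[OF F(3)[unfolded VF_continuous_def] inv(1)[OF m]], of "\<lambda>n. ?inv (nu n)"]
        by auto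
    qed
  qed
qed

end

theorem mainTheorem8:
  fixes D S :: "pref set" and F :: "pref \<Rightarrow> bndl"
  assumes "rich_single_crossing D"
    and "S = D \<or> (\<exists>Rlo\<in>D. \<exists>Rhi\<in>D. S = closed_interval D Rlo Rhi)"
    and "mechanism S F"
    and "monotone_mech S F"
    and "VF_continuous S F"
    and "finite (F ` S)"
  shows "strategy_proof S F"
proof -
  note convex = domain_or_interval_order_convex[OF assms(1,2)]
  interpret index_mechanism "pref_index ` S" "the_inv_into S pref_index" "F \<circ> the_inv_into S pref_index"
    using index_mechanism_pref_index[OF assms(1) convex assms(3-6)] .
  have inv: "the_inv_into S pref_index (pref_index R) = R" if "R \<in> S" for R
    using the_inv_into_f_f[OF inj_on_subset[OF inj_on_pref_index[OF assms(1)] convex(1)] that] .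
  show ?thesis
    unfolding strategy_proof_def
  proof (intro ballI)
    fix R1 R2 assume "R1 \<in> S" "R2 \<in> S"
    then show "R1 (F R1) (F R2)"
      using no_envy[of "pref_index R1" "pref_index R2"] no_envy[of "pref_index R2" "pref_index R1"] inv
      by (cases "pref_index R1 \<le> pref_index R2") auto
  qed
qed

end
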